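(* Assume $A_n$ satisfies (C1) and (C2), and let $(\beta_0,B_0)\in\Theta$. Then there exists $\delta>0$ such that $$\limsup_{n\to\infty}\frac1n\log\mathbb P_{n,\beta_0,B_0}\Big(\Big|\sum_{i=1}^nX_im_i(\mathbf X)\Big|<n\delta\Big)<0.$$
   Context: For each $n$, $A_n$ is a known symmetric $n\times n$ matrix with non-negative entries and zero diagonal. The Ising model is $\mathbb P_{n,\beta,B}(\mathbf X=\mathbf x)=Z_n(\beta,B)^{-1}\exp(\frac{\beta}{2}\mathbf x^\top A_n\mathbf x+B\sum_i x_i)$ on $\{-1,1\}^n$. (C1): there is a constant $\gamma<\infty$ with $\max_{i}\sum_{j}A_n(i,j)\le\gamma$ for all $n$; (C2): $\liminf_n\frac1n\sum_{i,j}A_n(i,j)>0$. $\Theta=\{(\beta,B):\beta>0,B\ne0\}$. $m_i(\mathbf x)=\sum_jA_n(i,j)x_j$. *)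

theory Defs
  imports "HOL-Analysis.Analysis"
begin

text \<open>A matrix sequence is represented as A :: nat => nat => nat => real, where
  A n i j is the (i,j) entry of the n x n matrix A_n (indices i, j < n).\<close>

definition spin_configs :: "nat \<Rightarrow> (nat \<Rightarrow> real) set" where
  "spin_configs n = PiE {..<n} (\<lambda>_. {-1, 1})"

definition local_field :: "(nat \<Rightarrow> nat \<Rightarrow> nat \<Rightarrow> real) \<Rightarrow> nat \<Rightarrow> (nat \<Rightarrow> real) \<Rightarrow> nat \<Rightarrow> real" where
  "local_field A n x i = (\<Sum>j<n. A n i j * x j)"

definition ising_weight :: "(nat \<Rightarrow> nat \<Rightarrow> nat \<Rightarrow> real) \<Rightarrow> nat \<Rightarrow> real \<Rightarrow> real \<Rightarrow> (nat \<Rightarrow> real) \<Rightarrow> real" where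
  "ising_weight A n \<beta> B x =
     exp (\<beta> / 2 * (\<Sum>i<n. \<Sum>j<n. x i * A n i j * x j) + B * (\<Sum>i<n. x i))"

definition ising_Z :: "(nat \<Rightarrow> nat \<Rightarrow> nat \<Rightarrow> real) \<Rightarrow> nat \<Rightarrow> real \<Rightarrow> real \<Rightarrow> real" where
  "ising_Z A n \<beta> B = (\<Sum>x\<in>spin_configs n. ising_weight A n \<beta> B x)"

definition ising_prob :: "(nat \<Rightarrow> nat \<Rightarrow> nat \<Rightarrow> real) \<Rightarrow> nat \<Rightarrow> real \<Rightarrow> real \<Rightarrow> ((nat \<Rightarrow> real) \<Rightarrow> bool) \<Rightarrow> real" where
  "ising_prob A n \<beta> B P =
     (\<Sum>x\<in>{x\<in>spin_configs n. P x}. ising_weight A n \<beta> B x) / ising_Z A n \<beta> B"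

definition log_ereal :: "real \<Rightarrow> ereal" where
  "log_ereal p = (if p = 0 then -\<infinity> else ereal (ln p))"

end

theory Submission imports Defs begin

text \<open>Under the product weights exp (B \<Sum>i x_i) the spins are independent with mean tanh B, so
  the energy \<Sum>i x_i m_i(x) = \<Sum>i,j x_i A_ij x_j has mean (tanh B)^2 \<Sum>i,j A_ij, which by (C2) is
  eventually at least c n. Jensen's inequality for exp bounds the partition function below by the
  product partition function times exp (\<beta>/2 (tanh B)^2 \<Sum>i,j A_ij), while on the event that the
  energy is below n \<delta> the Ising weight exceeds the product weight by at most exp (\<beta> n \<delta> / 2).
  For \<delta> = (tanh B)^2 c / 2 the event therefore has probability at most exp (- \<beta> (tanh B)^2 c n / 4).\<close>

lemma sum_exp_ge_exp_weighted_mean: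
  fixes f w :: "'a \<Rightarrow> real"
  assumes "finite S" and w_nonneg: "\<And>x. x \<in> S \<Longrightarrow> w x \<ge> 0" and W: "(\<Sum>x\<in>S. w x) = W" "W > 0"
  shows "W * exp ((\<Sum>x\<in>S. f x * w x) / W) \<le> (\<Sum>x\<in>S. exp (f x) * w x)"
proof -
  define a where "a = (\<Sum>x\<in>S. f x * w x) / W"
  have "W * exp a = (\<Sum>x\<in>S. exp a * (1 + (f x - a)) * w x)"
  proof -
    have "(\<Sum>x\<in>S. exp a * (1 + (f x - a)) * w x)
        = exp a * ((\<Sum>x\<in>S. w x) + (\<Sum>x\<in>S. f x * w x) - a * (\<Sum>x\<in>S. w x))"
      by (simp add: algebra_simps sum.distrib sum_subtractf sum_distrib_left)
    also have "\<dots> = W * exp a" using W by (simp add: a_def)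
    finally show ?thesis by simp
  qed
  also have "\<dots> \<le> (\<Sum>x\<in>S. exp (f x) * w x)"
  proof (rule sum_mono)
    fix x assume "x \<in> S"
    have "exp a * (1 + (f x - a)) \<le> exp a * exp (f x - a)"
      by (simp add: exp_ge_add_one_self)
    also have "\<dots> = exp (f x)" by (simp add: exp_diff)
    finally show "exp a * (1 + (f x - a)) * w x \<le> exp (f x) * w x"
      using w_nonneg[OF \<open>x \<in> S\<close>] by (rule mult_right_mono)
  qed
  finally show ?thesis by (simp add: a_def)
qed

lemma finite_spin_configs: "finite (spin_configs n)"
  unfolding spin_configs_def by (auto intro!: finite_PiE)

lemma sum_spin_configs_prod:
  fixes h :: "nat \<Rightarrow> real \<Rightarrow> real"
  shows "(\<Sum>x\<in>spin_configs n. \<Prod>k<n. h k (x k)) = (\<Prod>k<n. h k 1 + h k (-1))"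
proof -
  have "(\<Sum>x\<in>spin_configs n. \<Prod>k<n. h k (x k)) = (\<Prod>k<n. \<Sum>v\<in>{-1,1}. h k v)"
    unfolding spin_configs_def by (rule prod_sum_PiE[symmetric]) auto
  then show ?thesis by (simp add: add.commute)
qed

lemma exp_field_eq_prod: "exp (B * (\<Sum>k<(n::nat). x k)) = (\<Prod>k<n. exp (B * x k))"
  unfolding sum_distrib_left by (subst exp_sum) auto

lemma sum_spin_configs_exp_field:
  "(\<Sum>x\<in>spin_configs n. exp (B * (\<Sum>k<n. x k))) = (2 * cosh B) ^ n"
proof -
  have "(\<Sum>x\<in>spin_configs n. exp (B * (\<Sum>k<n. x k))) = (\<Prod>k<n. exp B + exp (- B))"
    unfolding exp_field_eq_prod by (simp add: sum_spin_configs_prod[of "\<lambda>_ v. exp (B * v)"])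
  also have "exp B + exp (- B) = 2 * cosh B" by (simp add: cosh_def)
  finally show ?thesis by simp
qed

lemma sum_spin_configs_exp_field_pair:
  assumes "i < n" "j < n" "i \<noteq> j"
  shows "(\<Sum>x\<in>spin_configs n. exp (B * (\<Sum>k<n. x k)) * (x i * x j))
           = tanh B ^ 2 * (2 * cosh B) ^ n"
proof -
  define h where "h k v = exp (B * v) * (if k \<in> {i, j} then v else 1)" for k v
  have "exp (B * (\<Sum>k<n. x k)) * (x i * x j) = (\<Prod>k<n. h k (x k))" for x
  proof -
    have "{..<n} \<inter> {k. k \<in> {i, j}} = {i, j}" using assms by auto
    then have "(\<Prod>k<n. if k \<in> {i, j} then x k else 1) = x i * x j"
      using assms by (simp add: prod.If_cases)
    then show ?thesis unfolding h_def prod.distrib exp_field_eq_prod by simp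
  qed
  then have "(\<Sum>x\<in>spin_configs n. exp (B * (\<Sum>k<n. x k)) * (x i * x j))
      = (\<Prod>k<n. if k \<in> {i, j} then 2 * sinh B else 2 * cosh B)"
    by (simp add: sum_spin_configs_prod)
       (auto intro!: prod.cong simp: h_def sinh_def cosh_def)
  also have "\<dots> = (2 * sinh B) ^ 2 * (2 * cosh B) ^ (n - 2)"
  proof -
    have "{..<n} \<inter> {k. k \<in> {i, j}} = {i, j}" "{..<n} \<inter> - {k. k \<in> {i, j}} = {..<n} - {i, j}"
      using assms by auto
    moreover have "card ({..<n} - {i, j}) = n - 2" using assms by (simp add: card_Diff_subset)
    ultimately show ?thesis using assms by (simp add: prod.If_cases power2_eq_square del: power_mult_distrib)
  qed
  also have "\<dots> = tanh B ^ 2 * (2 * cosh B) ^ n"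
  proof -
    have "n = (n - 2) + 2" using assms by linarith
    then have "(2 * cosh B) ^ n = (2 * cosh B) ^ 2 * (2 * cosh B) ^ (n - 2)"
      by (metis power_add mult.commute)
    moreover have "cosh B \<noteq> 0" using cosh_real_pos[of B] by simp
    ultimately show ?thesis by (simp add: tanh_def field_simps)
  qed
  finally show ?thesis .
qed

lemma sum_spin_configs_quadratic_form:
  fixes M :: "nat \<Rightarrow> nat \<Rightarrow> real"
  assumes diag: "\<And>i. i < n \<Longrightarrow> M i i = 0"
  shows "(\<Sum>x\<in>spin_configs n. (\<Sum>i<n. \<Sum>j<n. x i * M i j * x j) * exp (B * (\<Sum>k<n. x k)))
           = tanh B ^ 2 * (\<Sum>i<n. \<Sum>j<n. M i j) * (2 * cosh B) ^ n"
proof -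
  let ?w = "\<lambda>x. exp (B * (\<Sum>k<n. x k))"
  have "(\<Sum>x\<in>spin_configs n. (\<Sum>i<n. \<Sum>j<n. x i * M i j * x j) * ?w x)
      = (\<Sum>i<n. \<Sum>j<n. M i j * (\<Sum>x\<in>spin_configs n. ?w x * (x i * x j)))"
    by (simp add: sum_distrib_left sum_distrib_right sum.swap[of _ "spin_configs n"] mult_ac)
  also have "\<dots> = (\<Sum>i<n. \<Sum>j<n. M i j * (tanh B ^ 2 * (2 * cosh B) ^ n))"
  proof (intro sum.cong refl)
    fix i j assume "i \<in> {..<n}" "j \<in> {..<n}"
    then show "M i j * (\<Sum>x\<in>spin_configs n. ?w x * (x i * x j)) = M i j * (tanh B ^ 2 * (2 * cosh B) ^ n)"
      by (cases "i = j") (simp_all add: diag sum_spin_configs_exp_field_pair)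
  qed
  also have "\<dots> = (\<Sum>i<n. \<Sum>j<n. M i j) * (tanh B ^ 2 * (2 * cosh B) ^ n)"
    by (simp add: sum_distrib_right)
  finally show ?thesis by (simp only: mult_ac)
qed

lemma sum_spin_local_field:
  "(\<Sum>i<n. x i * local_field A n x i) = (\<Sum>i<n. \<Sum>j<n. x i * A n i j * x j)"
  unfolding local_field_def sum_distrib_left by (simp add: mult_ac)

lemma ising_prob_nonneg: "ising_prob A n \<beta> B P \<ge> 0"
  unfolding ising_prob_def ising_Z_def ising_weight_def
  by (intro divide_nonneg_nonneg sum_nonneg) auto

lemma ising_prob_small_energy_le:
  assumes diag: "\<And>i. i < n \<Longrightarrow> A n i i = 0" and "\<beta> \<ge> 0"
  shows "ising_prob A n \<beta> B (\<lambda>x. \<bar>\<Sum>i<n. x i * local_field A n x i\<bar> < r)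
           \<le> exp (\<beta> / 2 * (r - tanh B ^ 2 * (\<Sum>i<n. \<Sum>j<n. A n i j)))"
proof -
  define Q where "Q x = (\<Sum>i<n. \<Sum>j<n. x i * A n i j * x j)" for x :: "nat \<Rightarrow> real"
  define w where "w x = exp (B * (\<Sum>k<n. x k))" for x :: "nat \<Rightarrow> real"
  define W where "W = (2 * cosh B) ^ n"
  define a where "a = \<beta> / 2 * (tanh B ^ 2 * (\<Sum>i<n. \<Sum>j<n. A n i j))"
  define E where "E = {x \<in> spin_configs n. \<bar>\<Sum>i<n. x i * local_field A n x i\<bar> < r}"
  have W_pos: "W > 0" unfolding W_def by (simp add: cosh_real_pos)
  have w_nonneg: "w x \<ge> 0" for x unfolding w_def by simp
  have sum_w: "(\<Sum>x\<in>spin_configs n. w x) = W"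
    unfolding w_def W_def by (rule sum_spin_configs_exp_field)
  have weight: "ising_weight A n \<beta> B x = exp (\<beta> / 2 * Q x) * w x" for x
    unfolding ising_weight_def Q_def w_def by (simp add: exp_add)
  have "(\<Sum>x\<in>spin_configs n. \<beta> / 2 * Q x * w x) = \<beta> / 2 * (\<Sum>x\<in>spin_configs n. Q x * w x)"
    by (simp add: sum_distrib_left mult.assoc)
  also have "\<dots> = a * W"
    using sum_spin_configs_quadratic_form[of n "A n" B] diag
    by (simp add: a_def Q_def w_def W_def)
  finally have "W * exp a = W * exp ((\<Sum>x\<in>spin_configs n. \<beta> / 2 * Q x * w x) / W)"
    using W_pos by simp
  also have "\<dots> \<le> ising_Z A n \<beta> B"
    unfolding ising_Z_def weight
    by (rule sum_exp_ge_exp_weighted_mean) (simp_all add: finite_spin_configs sum_w W_pos w_nonneg)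
  finally have Z_ge: "W * exp a \<le> ising_Z A n \<beta> B" .
  have "(\<Sum>x\<in>E. ising_weight A n \<beta> B x) \<le> (\<Sum>x\<in>E. exp (\<beta> / 2 * r) * w x)"
  proof (rule sum_mono)
    fix x assume "x \<in> E"
    then have "Q x < r" by (simp add: E_def Q_def sum_spin_local_field abs_less_iff)
    then show "ising_weight A n \<beta> B x \<le> exp (\<beta> / 2 * r) * w x"
      unfolding weight w_def using \<open>\<beta> \<ge> 0\<close> by (simp add: mult_left_mono)
  qed
  also have "\<dots> \<le> exp (\<beta> / 2 * r) * W"
    unfolding sum_distrib_left[symmetric] sum_w[symmetric] E_def
    by (intro mult_left_mono sum_mono2 finite_spin_configs) (auto simp: w_nonneg)
  finally have "ising_prob A n \<beta> B (\<lambda>x. \<bar>\<Sum>i<n. x i * local_field A n x i\<bar> < r)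
      \<le> exp (\<beta> / 2 * r) * W / (W * exp a)"
    unfolding ising_prob_def E_def[symmetric] using Z_ge W_pos by (intro frac_le) auto
  also have "\<dots> = exp (\<beta> / 2 * (r - tanh B ^ 2 * (\<Sum>i<n. \<Sum>j<n. A n i j)))"
    using W_pos by (simp add: a_def exp_diff right_diff_distrib)
  finally show ?thesis .
qed

lemma ising_prob_small_energy_le_exp_linear:
  assumes diag: "\<And>i. i < n \<Longrightarrow> A n i i = 0" and "\<beta> \<ge> 0"
    and density: "c * real n \<le> (\<Sum>i<n. \<Sum>j<n. A n i j)"
  shows "ising_prob A n \<beta> B (\<lambda>x. \<bar>\<Sum>i<n. x i * local_field A n x i\<bar> < real n * (tanh B ^ 2 * c / 2))
           \<le> exp (- (\<beta> * tanh B ^ 2 * c / 4) * real n)"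
proof -
  have "tanh B ^ 2 * (c * real n) \<le> tanh B ^ 2 * (\<Sum>i<n. \<Sum>j<n. A n i j)"
    using density by (simp add: mult_left_mono)
  then have "real n * (tanh B ^ 2 * c / 2) - tanh B ^ 2 * (\<Sum>i<n. \<Sum>j<n. A n i j)
      \<le> - (tanh B ^ 2 * c * real n / 2)"
    by (simp add: algebra_simps)
  then have "\<beta> / 2 * (real n * (tanh B ^ 2 * c / 2) - tanh B ^ 2 * (\<Sum>i<n. \<Sum>j<n. A n i j))
      \<le> \<beta> / 2 * - (tanh B ^ 2 * c * real n / 2)"
    using \<open>\<beta> \<ge> 0\<close> by (intro mult_left_mono) auto
  then have "exp (\<beta> / 2 * (real n * (tanh B ^ 2 * c / 2) - tanh B ^ 2 * (\<Sum>i<n. \<Sum>j<n. A n i j)))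
      \<le> exp (- (\<beta> * tanh B ^ 2 * c / 4) * real n)"
    by (simp add: algebra_simps)
  then show ?thesis
    using ising_prob_small_energy_le[of n A, OF diag \<open>\<beta> \<ge> 0\<close>] order_trans by blast
qed

lemma limsup_scaled_log_le:
  fixes p :: "nat \<Rightarrow> real"
  assumes "eventually (\<lambda>n. 0 \<le> p n \<and> p n \<le> exp (- \<kappa> * real n)) sequentially"
  shows "limsup (\<lambda>n. ereal (1 / real n) * log_ereal (p n)) \<le> ereal (- \<kappa>)"
proof (rule Limsup_bounded)
  show "eventually (\<lambda>n. ereal (1 / real n) * log_ereal (p n) \<le> ereal (- \<kappa>)) sequentially"
    using assms eventually_gt_at_top[of 0]
  proof eventually_elim
    case (elim n)
    show ?case
    proof (cases "p n = 0")
      case False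
      then have "ln (p n) \<le> - \<kappa> * real n"
        using elim by (metis ln_exp ln_le_cancel_iff exp_gt_zero order_less_le)
      then show ?thesis using False elim by (simp add: log_ereal_def divide_le_eq)
    qed (use elim in \<open>simp add: log_ereal_def\<close>)
  qed
qed

theorem lemma2:
  fixes A :: "nat \<Rightarrow> nat \<Rightarrow> nat \<Rightarrow> real" and \<beta>0 B0 :: real
  assumes symm: "\<And>n i j. i < n \<Longrightarrow> j < n \<Longrightarrow> A n i j = A n j i"
    and nonneg: "\<And>n i j. i < n \<Longrightarrow> j < n \<Longrightarrow> A n i j \<ge> 0"
    and diag: "\<And>n i. i < n \<Longrightarrow> A n i i = 0"
    and C1: "\<exists>\<gamma>::real. \<forall>n i. i < n \<longrightarrow> (\<Sum>j<n. A n i j) \<le> \<gamma>"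
    and C2: "liminf (\<lambda>n. ereal ((1 / real n) * (\<Sum>i<n. \<Sum>j<n. A n i j))) > 0"
    and beta0: "\<beta>0 > 0" and B0: "B0 \<noteq> 0"
  shows "\<exists>\<delta>>0. limsup (\<lambda>n. ereal (1 / real n) *
            log_ereal (ising_prob A n \<beta>0 B0
              (\<lambda>x. \<bar>\<Sum>i<n. x i * local_field A n x i\<bar> < real n * \<delta>))) < 0"
proof -
  obtain c where "0 < ereal c"
    and c_lt: "ereal c < liminf (\<lambda>n. ereal ((1 / real n) * (\<Sum>i<n. \<Sum>j<n. A n i j)))"
    using ereal_dense2[OF C2] by blast
  then have c_pos: "c > 0" by simp
  have "eventually (\<lambda>n. c < (1 / real n) * (\<Sum>i<n. \<Sum>j<n. A n i j)) sequentially"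
    using less_LiminfD[OF c_lt] by simp
  then have density_eventually: "eventually (\<lambda>n. c * real n \<le> (\<Sum>i<n. \<Sum>j<n. A n i j)) sequentially"
    using eventually_gt_at_top[of 0] by eventually_elim (simp add: field_simps)
  define \<delta> where "\<delta> = tanh B0 ^ 2 * c / 2"
  define \<kappa> where "\<kappa> = \<beta>0 * tanh B0 ^ 2 * c / 4"
  define P where "P n = ising_prob A n \<beta>0 B0
    (\<lambda>x. \<bar>\<Sum>i<n. x i * local_field A n x i\<bar> < real n * \<delta>)" for n
  have "\<delta> > 0" "\<kappa> > 0" using c_pos beta0 B0 by (simp_all add: \<delta>_def \<kappa>_def)
  have "eventually (\<lambda>n. 0 \<le> P n \<and> P n \<le> exp (- \<kappa> * real n)) sequentially"
    using density_eventually
  proof eventually_elim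
    case (elim n)
    then show ?case
      using ising_prob_small_energy_le_exp_linear[of n A \<beta>0 c B0] diag beta0
      by (simp add: P_def \<delta>_def \<kappa>_def ising_prob_nonneg)
  qed
  then have "limsup (\<lambda>n. ereal (1 / real n) * log_ereal (P n)) \<le> ereal (- \<kappa>)"
    by (rule limsup_scaled_log_le)
  also have "\<dots> < 0" using \<open>\<kappa> > 0\<close> by simp
  finally show ?thesis using \<open>\<delta> > 0\<close> unfolding P_def by blast
qed

end
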